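(* Let $(X,d)$ be a compact metric space, $f\colon X\to X$ a continuous map, and $S\subset X$ a compact subset with $f(S)\subset S$ and $CR(f|_S)=S$. If $f$ has the limit shadowing property around $S$, then $f$ has the shadowing property around $S$.
   Context: For $S\subset X$: $f$ has the shadowing property around $S$ if for every $\epsilon>0$ there is $\delta>0$ such that every $\delta$-pseudo orbit of $f$ (a sequence $(x_i)_{i\ge0}$ with $d(f(x_i),x_{i+1})\le\delta$ for all $i$) contained in $S$ is $\epsilon$-shadowed by some point $x\in X$ (i.e. $d(x_i,f^i(x))\le\epsilon$ for all $i$); $f$ has the limit shadowing property around $S$ if every limit pseudo orbit (sequence with $\lim_i d(f(x_i),x_{i+1})=0$) contained in $S$ admits $y\in X$ with $\lim_i d(x_i,f^i(y))=0$. $CR(g)$ denotes the set of chain recurrent points of $g$: $x$ such that for every $\delta>0$ there is a finite sequence $x=x_0,x_1,\dots,x_k=x$ ($k\ge1$) with $d(g(x_i),x_{i+1})\le\delta$ for $0\le i<k$. *)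

theory Defs
  imports "HOL-Analysis.Analysis"
begin

definition pseudo_orbit :: "('a::metric_space \<Rightarrow> 'a) \<Rightarrow> real \<Rightarrow> (nat \<Rightarrow> 'a) \<Rightarrow> bool" where
  "pseudo_orbit f \<delta> xs \<longleftrightarrow> (\<forall>i. dist (f (xs i)) (xs (Suc i)) \<le> \<delta>)"

definition limit_pseudo_orbit :: "('a::metric_space \<Rightarrow> 'a) \<Rightarrow> (nat \<Rightarrow> 'a) \<Rightarrow> bool" where
  "limit_pseudo_orbit f xs \<longleftrightarrow> (\<lambda>i. dist (f (xs i)) (xs (Suc i))) \<longlonglongrightarrow> 0"

definition shadowing_around :: "'a::metric_space set \<Rightarrow> ('a \<Rightarrow> 'a) \<Rightarrow> 'a set \<Rightarrow> bool" where
  "shadowing_around X f S \<longleftrightarrow>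
     (\<forall>\<epsilon>>0. \<exists>\<delta>>0. \<forall>xs. pseudo_orbit f \<delta> xs \<and> range xs \<subseteq> S \<longrightarrow>
        (\<exists>x\<in>X. \<forall>i. dist (xs i) ((f ^^ i) x) \<le> \<epsilon>))"

definition limit_shadowing_around :: "'a::metric_space set \<Rightarrow> ('a \<Rightarrow> 'a) \<Rightarrow> 'a set \<Rightarrow> bool" where
  "limit_shadowing_around X f S \<longleftrightarrow>
     (\<forall>xs. limit_pseudo_orbit f xs \<and> range xs \<subseteq> S \<longrightarrow>
        (\<exists>y\<in>X. (\<lambda>i. dist (xs i) ((f ^^ i) y)) \<longlonglongrightarrow> 0))"

definition chain_recurrent_set :: "'a::metric_space set \<Rightarrow> ('a \<Rightarrow> 'a) \<Rightarrow> 'a set" where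
  "chain_recurrent_set A g = {x \<in> A. \<forall>\<delta>>0. \<exists>k\<ge>1. \<exists>c::nat \<Rightarrow> 'a.
      (\<forall>i\<le>k. c i \<in> A) \<and> c 0 = x \<and> c k = x \<and> (\<forall>i<k. dist (g (c i)) (c (Suc i)) \<le> \<delta>)}"

end

theory Submission
  imports Defs
begin

text \<open>Suppose shadowing fails for some \<open>\<epsilon>\<close>. Then for every \<open>\<delta>\<close> there is a \<open>\<delta>\<close>-pseudo orbit
in \<open>S\<close> that is not \<open>\<epsilon>\<close>-shadowed, and by compactness already a finite segment of it is not
\<open>\<epsilon>\<close>-shadowed by any point. Since every point of the compact set \<open>S\<close> is chain recurrent, the
chain relation is symmetric up to a change of \<open>\<delta>\<close>, so the end of the segment can be joined
back to its start: we obtain \<open>\<delta>\<close>-chain loops that are not \<open>\<epsilon>\<close>-shadowed, with \<open>\<delta> \<rightarrow> 0\<close>.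
Passing to loops whose base points converge and concatenating them gives a limit pseudo orbit
in \<open>S\<close>. A point limit-shadowing it eventually \<open>\<epsilon>\<close>-shadows each later loop, a contradiction.\<close>

definition is_chain :: "'a::metric_space set \<Rightarrow> ('a \<Rightarrow> 'a) \<Rightarrow> real \<Rightarrow> nat \<Rightarrow> (nat \<Rightarrow> 'a) \<Rightarrow> bool" where
  "is_chain S f \<delta> k c \<longleftrightarrow> (\<forall>i\<le>k. c i \<in> S) \<and> (\<forall>i<k. dist (f (c i)) (c (Suc i)) \<le> \<delta>)"

definition chain_reach :: "'a::metric_space set \<Rightarrow> ('a \<Rightarrow> 'a) \<Rightarrow> real \<Rightarrow> 'a \<Rightarrow> 'a \<Rightarrow> bool" where
  "chain_reach S f \<delta> x y \<longleftrightarrow> (\<exists>k\<ge>1. \<exists>c. is_chain S f \<delta> k c \<and> c 0 = x \<and> c k = y)"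

lemma chain_recurrent_set_iff:
  "x \<in> chain_recurrent_set S f \<longleftrightarrow> x \<in> S \<and> (\<forall>\<delta>>0. chain_reach S f \<delta> x x)"
  unfolding chain_recurrent_set_def chain_reach_def is_chain_def by blast

lemma is_chain_append:
  assumes "is_chain S f \<delta> k c" "is_chain S f \<delta> m d" "c k = d 0"
  shows "is_chain S f \<delta> (k + m) (\<lambda>i. if i \<le> k then c i else d (i - k))"
  unfolding is_chain_def
proof (intro conjI allI impI)
  fix i assume "i \<le> k + m"
  then show "(if i \<le> k then c i else d (i - k)) \<in> S"
    using assms(1,2) by (auto simp: is_chain_def)
next
  fix i assume i: "i < k + m"
  consider "i < k" | "i \<ge> k" by linarith
  then show "dist (f (if i \<le> k then c i else d (i - k))) (if Suc i \<le> k then c (Suc i) else d (Suc i - k)) \<le> \<delta>"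
  proof cases
    case 1
    then show ?thesis using assms(1,3) by (auto simp: is_chain_def Suc_le_eq)
  next
    case 2
    then have "Suc i - k = Suc (i - k)" "i - k < m" using i by auto
    then show ?thesis using 2 assms(2,3) by (auto simp: is_chain_def)
  qed
qed

lemma chain_reach_endpoints: "chain_reach S f \<delta> x y \<Longrightarrow> x \<in> S \<and> y \<in> S"
  unfolding chain_reach_def is_chain_def by (metis le0 order_refl)

lemma chain_reach_step:
  assumes "chain_reach S f \<delta> x y" "z \<in> S" "dist (f y) z \<le> \<delta>"
  shows "chain_reach S f \<delta> x z"
proof -
  obtain k c where c: "k \<ge> 1" "is_chain S f \<delta> k c" "c 0 = x" "c k = y"
    using assms(1) unfolding chain_reach_def by blast
  have "is_chain S f \<delta> 1 (\<lambda>i. if i = 0 then y else z)"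
    using assms chain_reach_endpoints[OF assms(1)] by (auto simp: is_chain_def le_Suc_eq)
  from is_chain_append[OF c(2) this] c(1,3,4) show ?thesis
    unfolding chain_reach_def
    by (intro exI[of _ "k + 1"] conjI exI[of _ "\<lambda>i. if i \<le> k then c i else if i - k = 0 then y else z"]) auto
qed

lemma is_chain_enters_set:
  assumes "A \<subseteq> B" and closed: "\<And>w w'. w \<in> B \<Longrightarrow> w' \<in> S \<Longrightarrow> dist (f w) w' \<le> \<eta> \<Longrightarrow> w' \<in> A"
    and "is_chain S f \<eta> m e" "e j \<in> B" "j < k" "k \<le> m"
  shows "e k \<in> A"
  using \<open>j < k\<close> \<open>k \<le> m\<close>
proof (induction k)
  case 0 then show ?case by simp
next
  case (Suc k)
  have "e k \<in> B"
    using Suc assms(1,4) by (cases "j = k") auto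
  then show ?case
    using closed assms(3) Suc.prems by (auto simp: is_chain_def)
qed

lemma chain_reach_backward_closed:
  assumes modulus: "\<And>u v. u \<in> S \<Longrightarrow> v \<in> S \<Longrightarrow> dist u v \<le> 2 * \<eta> \<Longrightarrow> dist (f u) (f v) \<le> \<delta> - \<eta>"
    and recurrent: "\<forall>z\<in>S. chain_reach S f \<eta> z z"
    and "chain_reach S f \<delta> y \<kappa>" "z \<in> S" "dist (f z) \<kappa> \<le> \<eta>"
  shows "chain_reach S f \<delta> y z"
proof -
  define K where "K = {w. chain_reach S f \<delta> y w}"
  define B where "B = {w \<in> S. \<exists>\<kappa>\<in>K. dist w \<kappa> \<le> 2 * \<eta>}"
  have "\<eta> \<ge> 0" using assms(5) zero_le_dist order_trans by blast
  then have "K \<subseteq> B" by (auto simp: K_def B_def dest: chain_reach_endpoints)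
  have B_to_K: "w' \<in> K" if "w \<in> B" "w' \<in> S" "dist (f w) w' \<le> \<eta>" for w w'
  proof -
    obtain \<kappa>' where "\<kappa>' \<in> K" "w \<in> S" "dist w \<kappa>' \<le> 2 * \<eta>" using \<open>w \<in> B\<close> by (auto simp: B_def)
    moreover from this have "\<kappa>' \<in> S" by (auto simp: K_def dest: chain_reach_endpoints)
    ultimately have "dist (f \<kappa>') (f w) \<le> \<delta> - \<eta>" using modulus by (simp add: dist_commute)
    then have "dist (f \<kappa>') w' \<le> \<delta>"
      using dist_triangle[of "f \<kappa>'" w' "f w"] that(3) by linarith
    then show ?thesis using chain_reach_step \<open>\<kappa>' \<in> K\<close> that(2) by (auto simp: K_def)
  qed
  \<comment> \<open>Go once around an \<open>\<eta>\<close>-loop at \<open>z\<close>: its second point is \<open>2\<eta>\<close>-close to \<open>\<kappa> \<in> K\<close>, and from there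
    every further step of the loop lands in \<open>K\<close>.\<close>
  obtain m e where e: "m \<ge> 1" "is_chain S f \<eta> m e" "e 0 = z" "e m = z"
    using recurrent assms(4) unfolding chain_reach_def by blast
  have "e 1 \<in> S" "dist (f z) (e 1) \<le> \<eta>" using e by (auto simp: is_chain_def)
  then have "dist (e 1) \<kappa> \<le> 2 * \<eta>"
    using dist_triangle[of "e 1" \<kappa> "f z"] assms(5) by (simp add: dist_commute)
  with \<open>e 1 \<in> S\<close> have "e 1 \<in> B" using assms(3) by (auto simp: B_def K_def)
  have "e m \<in> K"
  proof (cases "m = 1")
    case True
    then show ?thesis
      using is_chain_enters_set[OF \<open>K \<subseteq> B\<close> B_to_K e(2), where j=0 and k=1] \<open>e 1 \<in> B\<close> e(3,4) by simp
  next
    case False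
    then show ?thesis
      using is_chain_enters_set[OF \<open>K \<subseteq> B\<close> B_to_K e(2), where j=1 and k=m] \<open>e 1 \<in> B\<close> e(1) by simp
  qed
  then show ?thesis using e(4) by (simp add: K_def)
qed

lemma chain_reach_reverse:
  assumes "compact S" "continuous_on S f" "\<forall>x\<in>S. \<forall>\<delta>>0. chain_reach S f \<delta> x x" "\<delta> > 0"
  shows "\<exists>\<eta>>0. \<eta> \<le> \<delta> \<and> (\<forall>x y. chain_reach S f \<eta> x y \<longrightarrow> chain_reach S f \<delta> y x)"
proof -
  obtain d where d: "d > 0" "\<And>u v. u \<in> S \<Longrightarrow> v \<in> S \<Longrightarrow> dist u v < d \<Longrightarrow> dist (f u) (f v) < \<delta>/2"
    using compact_uniformly_continuous[OF assms(2,1)] \<open>\<delta> > 0\<close>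
    unfolding uniformly_continuous_on_def by (metis half_gt_zero)
  define \<eta> where "\<eta> = min (\<delta>/2) (d/3)"
  have \<eta>: "\<eta> > 0" "\<eta> \<le> \<delta>/2" "2 * \<eta> < d" using d(1) \<open>\<delta> > 0\<close> by (auto simp: \<eta>_def)
  have modulus: "dist (f u) (f v) \<le> \<delta> - \<eta>" if "u \<in> S" "v \<in> S" "dist u v \<le> 2 * \<eta>" for u v
    using d(2)[OF that(1,2)] that(3) \<eta> by fastforce
  have "chain_reach S f \<delta> y x" if forward: "chain_reach S f \<eta> x y" for x y
  proof -
    obtain k c where c: "k \<ge> 1" "is_chain S f \<eta> k c" "c 0 = x" "c k = y"
      using forward unfolding chain_reach_def by blast
    have "chain_reach S f \<delta> y (c j)" if "j \<le> k" for j
      using that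
    proof (induction rule: inc_induct)
      case base
      then show ?case using assms(3,4) c(2,4) by (auto simp: is_chain_def)
    next
      case (step j)
      then show ?case
        using chain_reach_backward_closed[OF modulus] assms(3) \<eta>(1) c(2) by (auto simp: is_chain_def)
    qed
    then show ?thesis using c(3) by auto
  qed
  with \<eta> show ?thesis by (intro exI[of _ \<eta>]) auto
qed

definition block_start :: "(nat \<Rightarrow> nat) \<Rightarrow> nat \<Rightarrow> nat" where
  "block_start len n = (\<Sum>m<n. len m)"

definition block_index :: "(nat \<Rightarrow> nat) \<Rightarrow> nat \<Rightarrow> nat" where
  "block_index len t = (LEAST n. t < block_start len (Suc n))"

definition concat_blocks :: "(nat \<Rightarrow> nat) \<Rightarrow> (nat \<Rightarrow> nat \<Rightarrow> 'a) \<Rightarrow> nat \<Rightarrow> 'a" where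
  "concat_blocks len g t = g (block_index len t) (t - block_start len (block_index len t))"

lemma block_start_Suc [simp]: "block_start len (Suc n) = block_start len n + len n"
  by (simp add: block_start_def)

lemma block_start_mono: "m \<le> n \<Longrightarrow> block_start len m \<le> block_start len n"
  unfolding block_start_def by (rule sum_mono2) auto

lemma block_start_ge:
  assumes "\<And>m. len m \<ge> 1"
  shows "n \<le> block_start len n"
proof (induction n)
  case (Suc n)
  then show ?case using assms[of n] by simp
qed simp

lemma block_index_eq:
  assumes "j < len n"
  shows "block_index len (block_start len n + j) = n"
proof (rule antisym)
  show "block_index len (block_start len n + j) \<le> n"
    unfolding block_index_def by (rule Least_le) (simp add: assms)
  show "n \<le> block_index len (block_start len n + j)"
  proof (rule ccontr)
    assume "\<not> ?thesis"
    then have "block_start len (Suc (block_index len (block_start len n + j))) \<le> block_start len n"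
      by (intro block_start_mono) simp
    moreover have "block_start len n + j < block_start len (Suc (block_index len (block_start len n + j)))"
      unfolding block_index_def by (rule LeastI[of _ n]) (simp add: assms)
    ultimately show False by simp
  qed
qed

lemma block_index_bounds:
  assumes "\<And>m. len m \<ge> 1"
  shows "block_start len (block_index len t) \<le> t" "t < block_start len (Suc (block_index len t))"
proof -
  show upper: "t < block_start len (Suc (block_index len t))"
    unfolding block_index_def by (rule LeastI[of _ t]) (use block_start_ge[of len "Suc t"] assms in simp)
  show "block_start len (block_index len t) \<le> t"
  proof (cases "block_index len t")
    case (Suc k)
    then have "\<not> t < block_start len (Suc k)"
      unfolding block_index_def by (intro not_less_Least) simp
    then show ?thesis using Suc by simp
  qed (simp add: block_start_def)
qed

lemma concat_blocks_block:
  "j < len n \<Longrightarrow> concat_blocks len g (block_start len n + j) = g n j"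
  by (simp add: concat_blocks_def block_index_eq)

lemma block_decomposition:
  assumes "\<And>m. len m \<ge> 1"
  obtains j where "j < len (block_index len t)" "t = block_start len (block_index len t) + j"
proof
  show "t - block_start len (block_index len t) < len (block_index len t)"
    "t = block_start len (block_index len t) + (t - block_start len (block_index len t))"
    using block_index_bounds[of len t, OF assms] by simp_all
qed

lemma filterlim_block_index:
  assumes "\<And>m. len m \<ge> 1"
  shows "filterlim (block_index len) sequentially sequentially"
  unfolding filterlim_at_top eventually_sequentially
proof
  fix M
  show "\<exists>N. \<forall>t\<ge>N. M \<le> block_index len t"
  proof (intro exI allI impI)
    fix t assume "block_start len M \<le> t"
    show "M \<le> block_index len t"
    proof (rule ccontr)
      assume "\<not> M \<le> block_index len t"
      then have "block_start len (Suc (block_index len t)) \<le> block_start len M"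
        by (intro block_start_mono) simp
      then show False
        using block_index_bounds(2)[of len t, OF assms] \<open>block_start len M \<le> t\<close> by simp
    qed
  qed
qed

lemma limit_pseudo_orbit_concat_blocks:
  fixes g :: "nat \<Rightarrow> nat \<Rightarrow> 'a::metric_space"
  assumes len: "\<And>n. len n \<ge> 1" and "e \<longlonglongrightarrow> 0"
    and inner: "\<And>n j. Suc j < len n \<Longrightarrow> dist (f (g n j)) (g n (Suc j)) \<le> e n"
    and junction: "\<And>n. dist (f (g n (len n - 1))) (g (Suc n) 0) \<le> e n"
  shows "limit_pseudo_orbit f (concat_blocks len g)"
proof -
  let ?Z = "concat_blocks len g"
  have bound: "dist (f (?Z t)) (?Z (Suc t)) \<le> e (block_index len t)" for t
  proof -
    define n where "n = block_index len t"
    obtain j where j: "j < len n" "t = block_start len n + j"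
      using block_decomposition[of len t, OF len] unfolding n_def by blast
    have Zt: "?Z t = g n j" using concat_blocks_block[of j len n g] j by simp
    have "dist (f (?Z t)) (?Z (Suc t)) \<le> e n"
    proof (cases "Suc j < len n")
      case True
      then have "?Z (Suc t) = g n (Suc j)" using concat_blocks_block[of "Suc j" len n g] j by simp
      then show ?thesis using inner[OF True] Zt by simp
    next
      case False
      then have "j = len n - 1" "Suc t = block_start len (Suc n) + 0" using j by simp_all
      moreover have "?Z (block_start len (Suc n) + 0) = g (Suc n) 0"
        by (rule concat_blocks_block) (use len[of "Suc n"] in simp)
      ultimately have "?Z (Suc t) = g (Suc n) 0" "j = len n - 1" by simp_all
      then show ?thesis using junction[of n] Zt by simp
    qed
    then show ?thesis by (simp add: n_def)
  qed
  have lim_e: "(\<lambda>t. e (block_index len t)) \<longlonglongrightarrow> 0"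
    using filterlim_compose[OF \<open>e \<longlonglongrightarrow> 0\<close> filterlim_block_index[OF len]] .
  have "(\<lambda>t. dist (f (?Z t)) (?Z (Suc t))) \<longlonglongrightarrow> 0"
    by (rule tendsto_sandwich[OF _ _ tendsto_const lim_e]) (simp_all add: bound)
  then show ?thesis unfolding limit_pseudo_orbit_def .
qed

lemma funpow_image_subset: "f ` X \<subseteq> X \<Longrightarrow> (f ^^ i) ` X \<subseteq> X"
  by (induction i) auto

lemma continuous_on_funpow:
  assumes "continuous_on X f" "f ` X \<subseteq> X"
  shows "continuous_on X (f ^^ i)"
proof (induction i)
  case (Suc i)
  then show ?case
    using continuous_on_compose[OF Suc continuous_on_subset[OF assms(1)]]
      funpow_image_subset[OF assms(2)] by (simp add: image_comp)
qed (simp add: continuous_on_id)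

lemma shadowed_if_initial_segments_shadowed:
  fixes X :: "'a::metric_space set"
  assumes "compact X" "continuous_on X f" "f ` X \<subseteq> X"
    and segments: "\<And>N. \<exists>x\<in>X. \<forall>i<N. dist (\<xi> i) ((f ^^ i) x) \<le> \<epsilon>"
  shows "\<exists>x\<in>X. \<forall>i. dist (\<xi> i) ((f ^^ i) x) \<le> \<epsilon>"
proof -
  obtain x where x: "\<And>N. x N \<in> X" "\<And>N i. i < N \<Longrightarrow> dist (\<xi> i) ((f ^^ i) (x N)) \<le> \<epsilon>"
    using segments by metis
  obtain l r where "l \<in> X" "strict_mono r" and lim: "(x \<circ> r) \<longlonglongrightarrow> l"
    using compact_imp_seq_compact[OF assms(1)] x(1) unfolding seq_compact_def by blast
  have "dist (\<xi> i) ((f ^^ i) l) \<le> \<epsilon>" for i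
  proof (rule LIMSEQ_le_const2)
    show "(\<lambda>n. dist (\<xi> i) ((f ^^ i) ((x \<circ> r) n))) \<longlonglongrightarrow> dist (\<xi> i) ((f ^^ i) l)"
      using continuous_on_tendsto_compose[OF continuous_on_funpow[OF assms(2,3)] lim \<open>l \<in> X\<close>] x(1)
      by (intro tendsto_intros) auto
    show "\<exists>N. \<forall>n\<ge>N. dist (\<xi> i) ((f ^^ i) ((x \<circ> r) n)) \<le> \<epsilon>"
      using x(2) seq_suble[OF \<open>strict_mono r\<close>] by (intro exI[of _ "Suc i"]) (simp add: Suc_le_eq order_less_le_trans)
  qed
  with \<open>l \<in> X\<close> show ?thesis by blast
qed

lemma not_shadowing_aroundE:
  assumes "\<not> shadowing_around X f S"
  obtains \<epsilon> where "\<epsilon> > 0" "\<forall>\<eta>>0. \<exists>\<xi>. pseudo_orbit f \<eta> \<xi> \<and> range \<xi> \<subseteq> S \<and>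
      \<not> (\<exists>x\<in>X. \<forall>i. dist (\<xi> i) ((f ^^ i) x) \<le> \<epsilon>)"
  using assms unfolding shadowing_around_def by (metis not_le)

lemma nonshadowed_chain_loop:
  fixes X S :: "'a::metric_space set"
  assumes "compact X" "continuous_on X f" "f ` X \<subseteq> X" "compact S" "S \<subseteq> X"
    and recurrent: "\<forall>x\<in>S. \<forall>\<delta>>0. chain_reach S f \<delta> x x"
    and not_shadowed: "\<forall>\<eta>>0. \<exists>\<xi>. pseudo_orbit f \<eta> \<xi> \<and> range \<xi> \<subseteq> S \<and>
                         \<not> (\<exists>x\<in>X. \<forall>i. dist (\<xi> i) ((f ^^ i) x) \<le> \<epsilon>)"
    and "\<delta> > 0"
  obtains k c where "k \<ge> 1" "is_chain S f \<delta> k c" "c k = c 0"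
    "\<forall>x\<in>X. \<exists>i<k. \<epsilon> < dist (c i) ((f ^^ i) x)"
proof -
  obtain \<eta> where "\<eta> > 0" "\<eta> \<le> \<delta>"
    and reverse: "\<And>x y. chain_reach S f \<eta> x y \<Longrightarrow> chain_reach S f \<delta> y x"
    using chain_reach_reverse[OF assms(4) continuous_on_subset[OF assms(2,5)] recurrent \<open>\<delta> > 0\<close>]
    by blast
  obtain \<xi> where \<xi>: "pseudo_orbit f \<eta> \<xi>" "range \<xi> \<subseteq> S"
    and "\<not> (\<exists>x\<in>X. \<forall>i. dist (\<xi> i) ((f ^^ i) x) \<le> \<epsilon>)"
    using not_shadowed \<open>\<eta> > 0\<close> by blast
  then have "\<not> (\<forall>N. \<exists>x\<in>X. \<forall>i<N. dist (\<xi> i) ((f ^^ i) x) \<le> \<epsilon>)"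
    using shadowed_if_initial_segments_shadowed[OF assms(1-3)] by blast
  then obtain N where N: "\<forall>x\<in>X. \<exists>i<N. \<epsilon> < dist (\<xi> i) ((f ^^ i) x)"
    by (auto simp: not_le)
  have "is_chain S f \<eta> (Suc N) \<xi>" "is_chain S f \<delta> (Suc N) \<xi>"
    using \<xi> \<open>\<eta> \<le> \<delta>\<close> by (auto simp: is_chain_def pseudo_orbit_def intro: order_trans)
  then have "chain_reach S f \<delta> (\<xi> (Suc N)) (\<xi> 0)"
    by (intro reverse) (auto simp: chain_reach_def)
  then obtain m d where d: "m \<ge> 1" "is_chain S f \<delta> m d" "d 0 = \<xi> (Suc N)" "d m = \<xi> 0"
    unfolding chain_reach_def by blast
  let ?c = "\<lambda>i. if i \<le> Suc N then \<xi> i else d (i - Suc N)"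
  show ?thesis
  proof
    show "is_chain S f \<delta> (Suc N + m) ?c"
      using is_chain_append[OF \<open>is_chain S f \<delta> (Suc N) \<xi>\<close> d(2)] d(3) by simp
    show "?c (Suc N + m) = ?c 0" using d(1,4) by simp
    show "\<forall>x\<in>X. \<exists>i<Suc N + m. \<epsilon> < dist (?c i) ((f ^^ i) x)"
    proof
      fix x assume "x \<in> X"
      then obtain i where "i < N" "\<epsilon> < dist (\<xi> i) ((f ^^ i) x)" using N by blast
      then show "\<exists>i<Suc N + m. \<epsilon> < dist (?c i) ((f ^^ i) x)" by (intro exI[of _ i]) simp
    qed
  qed simp
qed

lemma limit_pseudo_orbit_through_loops:
  fixes S :: "'a::metric_space set"
  assumes "compact S" and w: "w \<longlonglongrightarrow> 0"
    and loops: "\<And>n. k n \<ge> 1" "\<And>n. is_chain S f (w n) (k n) (c n)" "\<And>n. c n (k n) = c n 0"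
  obtains Z where "limit_pseudo_orbit f Z" "range Z \<subseteq> S"
    "\<And>T. \<exists>n t. T \<le> t \<and> (\<forall>j<k n. Z (t + j) = c n j)"
proof -
  have "\<forall>n. c n 0 \<in> S" using loops(2) by (simp add: is_chain_def)
  then obtain a r where "strict_mono r" and "((\<lambda>n. c n 0) \<circ> r) \<longlonglongrightarrow> a"
    by (rule seq_compactE[OF compact_imp_seq_compact[OF assms(1)]])
  then have lim: "(\<lambda>n. c (r n) 0) \<longlonglongrightarrow> a" by (simp add: comp_def)
  define len where "len n = k (r n)" for n
  define g where "g n = c (r n)" for n
  define e where "e = (\<lambda>n. w (r n) + dist (g n 0) (g (Suc n) 0))"
  have len: "len n \<ge> 1" for n using loops(1) by (simp add: len_def)
  \<comment> \<open>The base points converge, so the jump from one loop to the next tends to zero.\<close>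
  have "e \<longlonglongrightarrow> 0"
    using tendsto_add[OF LIMSEQ_subseq_LIMSEQ[OF w \<open>strict_mono r\<close>] tendsto_dist[OF lim LIMSEQ_Suc[OF lim]]]
    by (simp add: e_def g_def comp_def)
  moreover have "dist (f (g n j)) (g n (Suc j)) \<le> e n" if "Suc j < len n" for n j
    using loops(2)[of "r n"] that by (auto simp: is_chain_def e_def g_def len_def intro: add_increasing2)
  moreover have "dist (f (g n (len n - 1))) (g (Suc n) 0) \<le> e n" for n
  proof -
    have "len n - 1 < len n" "Suc (len n - 1) = len n" using len[of n] by simp_all
    then have "dist (f (g n (len n - 1))) (g n 0) \<le> w (r n)"
      using loops(2)[of "r n"] loops(3)[of "r n"] unfolding is_chain_def g_def len_def by metis
    then show ?thesis
      using dist_triangle[of "f (g n (len n - 1))" "g (Suc n) 0" "g n 0"] by (simp add: e_def)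
  qed
  ultimately have "limit_pseudo_orbit f (concat_blocks len g)"
    by (rule limit_pseudo_orbit_concat_blocks[OF len])
  moreover have "range (concat_blocks len g) \<subseteq> S"
  proof -
    have "concat_blocks len g t \<in> S" for t
    proof -
      obtain j where j: "j < len (block_index len t)" "t = block_start len (block_index len t) + j"
        using block_decomposition[of len t, OF len] by blast
      then have "concat_blocks len g t = c (r (block_index len t)) j"
        using concat_blocks_block[of j len "block_index len t" g] j by (simp add: g_def)
      then show ?thesis using loops(2) j(1) by (simp add: is_chain_def len_def)
    qed
    then show ?thesis by blast
  qed
  moreover have "\<exists>n t. T \<le> t \<and> (\<forall>j<k n. concat_blocks len g (t + j) = c n j)" for T
    using block_start_ge[of len T, OF len] concat_blocks_block[of _ len T g]
    by (intro exI[of _ "r T"] exI[of _ "block_start len T"]) (simp add: len_def g_def)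
  ultimately show ?thesis by (rule that)
qed

theorem lemma2p1:
  fixes X S :: "'a::metric_space set" and f :: "'a \<Rightarrow> 'a"
  assumes "compact X"
    and "continuous_on X f" and "f ` X \<subseteq> X"
    and "compact S" and "S \<subseteq> X" and "f ` S \<subseteq> S"
    and "chain_recurrent_set S f = S"
    and "limit_shadowing_around X f S"
  shows "shadowing_around X f S"
proof (rule ccontr)
  assume "\<not> shadowing_around X f S"
  then obtain \<epsilon> where "\<epsilon> > 0" and not_shadowed: "\<forall>\<eta>>0. \<exists>\<xi>. pseudo_orbit f \<eta> \<xi> \<and> range \<xi> \<subseteq> S \<and>
      \<not> (\<exists>x\<in>X. \<forall>i. dist (\<xi> i) ((f ^^ i) x) \<le> \<epsilon>)"
    by (rule not_shadowing_aroundE)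
  have recurrent: "\<forall>x\<in>S. \<forall>\<delta>>0. chain_reach S f \<delta> x x"
    using assms(7) chain_recurrent_set_iff by blast
  define w where "w = (\<lambda>n. inverse (real (Suc n)))"
  have "\<exists>k c. k \<ge> 1 \<and> is_chain S f (w n) k c \<and> c k = c 0 \<and> (\<forall>x\<in>X. \<exists>i<k. \<epsilon> < dist (c i) ((f ^^ i) x))" for n
    by (rule nonshadowed_chain_loop[OF assms(1-5) recurrent not_shadowed, of "w n"]) (auto simp: w_def)
  then obtain k c where "\<And>n. k n \<ge> 1" "\<And>n. is_chain S f (w n) (k n) (c n)" "\<And>n. c n (k n) = c n 0"
    and loop_not_shadowed: "\<And>n. \<forall>x\<in>X. \<exists>i<k n. \<epsilon> < dist (c n i) ((f ^^ i) x)"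
    by metis
  then obtain Z where "limit_pseudo_orbit f Z" "range Z \<subseteq> S"
    and late_copies: "\<And>T. \<exists>n t. T \<le> t \<and> (\<forall>j<k n. Z (t + j) = c n j)"
    using limit_pseudo_orbit_through_loops[OF assms(4)] LIMSEQ_inverse_real_of_nat unfolding w_def by metis
  then obtain y where "y \<in> X" and shadow: "(\<lambda>i. dist (Z i) ((f ^^ i) y)) \<longlonglongrightarrow> 0"
    using assms(8) unfolding limit_shadowing_around_def by blast
  obtain T where T: "\<And>i. i \<ge> T \<Longrightarrow> dist (Z i) ((f ^^ i) y) < \<epsilon>"
    using order_tendstoD(2)[OF shadow \<open>\<epsilon> > 0\<close>] unfolding eventually_sequentially by blast
  obtain n t where "T \<le> t" and copy: "\<forall>j<k n. Z (t + j) = c n j" using late_copies by blast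
  have "(f ^^ t) y \<in> X" using funpow_image_subset[OF assms(3)] \<open>y \<in> X\<close> by blast
  then obtain i where "i < k n" "\<epsilon> < dist (c n i) ((f ^^ i) ((f ^^ t) y))"
    using loop_not_shadowed by blast
  moreover have "dist (Z (t + i)) ((f ^^ (t + i)) y) < \<epsilon>" using T \<open>T \<le> t\<close> by simp
  ultimately show False using copy by (simp add: funpow_add add.commute)
qed

end
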